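(* Let $\hat\phi_{\mathrm{CS}}(\cdot)=\mathbb{1}(s(\cdot)>t_{\mathrm{CS}})$ be a given classifier, where the scoring function $s:\mathcal{X}\to\mathbb{R}$ and threshold $t_{\mathrm{CS}}$ are regarded as fixed. Let $F$ be the cumulative distribution function of $s(X^0)$, where $X^0\sim X\mid(Y=0)$. Apply $s$ to a left-out class-0 sample of size $m$ (independent of $s$ and $t_{\mathrm{CS}}$), giving scores $T_1,\dots,T_m$, with $k$-th order statistic $T_{(k)}$. If $T_{(1)}\le t_{\mathrm{CS}}$, let $k_s^*=\max\{k\in\{1,\dots,m\}:T_{(k)}\le t_{\mathrm{CS}}\}$ and define the surrogate classifier $\hat\phi_{k_s^*}(\cdot)=\mathbb{1}(s(\cdot)>T_{(k_s^* )})$. Then $R_0(\hat\phi_{k_s^*})\ge R_0(\hat\phi_{\mathrm{CS}})$, and for $\alpha\in(0,1)$, $$\mathbb{P}_m\big(R_0(\hat\phi_{k_s^*})>\alpha\big)\begin{cases}=1 & \text{if } t_{\mathrm{CS}}<F^{-1}(1-\alpha),\\ \le (2-\alpha-F(t_{\mathrm{CS}}))^m-(1-F(t_{\mathrm{CS}}))^m & \text{if } t_{\mathrm{CS}}\ge F^{-1}(1-\alpha),\end{cases}$$ where $\mathbb{P}_m$ is the probability with respect to the randomness of the left-out class-0 sample of size $m$.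
   Context: $(X,Y)$ is a random pair with $X\in\mathcal{X}\subset\mathbb{R}^d$ and $Y\in\{0,1\}$. For a classifier $\phi:\mathcal{X}\to\{0,1\}$, $R_0(\phi)=\mathbb{P}(\phi(X)=1\mid Y=0)$ is the population type I error (for a classifier depending on the left-out sample, this probability is over an independent new $X$ given $Y=0$, with the sample held fixed). The left-out scores $T_1,\dots,T_m$ are i.i.d. with distribution function $F$. *)

theory Defs
  imports "HOL-Probability.Probability"
begin

definition thresh_classifier :: "('a \<Rightarrow> real) \<Rightarrow> real \<Rightarrow> 'a \<Rightarrow> nat" where
  "thresh_classifier s t = (\<lambda>x. if s x > t then 1 else 0)"

text \<open>Population type I error R_0(phi) = P(phi(X) = 1 | Y = 0), where P0 is the
  law of X given Y = 0.\<close>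
definition R0 :: "'a measure \<Rightarrow> ('a \<Rightarrow> nat) \<Rightarrow> real" where
  "R0 P0 phi = measure P0 {x \<in> space P0. phi x = 1}"

definition order_stat :: "(nat \<Rightarrow> real) \<Rightarrow> nat \<Rightarrow> nat \<Rightarrow> real" where
  "order_stat T m k = sort (map T [0..<m]) ! (k - 1)"

definition kstar :: "(nat \<Rightarrow> real) \<Rightarrow> nat \<Rightarrow> real \<Rightarrow> nat" where
  "kstar T m t = Max {k \<in> {1..m}. order_stat T m k \<le> t}"

definition gen_inv :: "(real \<Rightarrow> real) \<Rightarrow> real \<Rightarrow> real" where
  "gen_inv F p = Inf {x. p \<le> F x}"

end

theory Submission
  imports Defs
begin

text \<open>The surrogate threshold \<open>T_(k*)\<close> is the largest left-out score not exceeding \<open>t_CS\<close>,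
  so its type I error \<open>1 - F T_(k*)\<close> dominates \<open>1 - F t_CS\<close>. By right continuity of \<open>F\<close> it
  exceeds \<open>\<alpha>\<close> exactly when \<open>T_(k*)\<close> lies below the quantile \<open>q = F\<^sup>-\<^sup>1(1 - \<alpha>)\<close>, which is
  automatic if \<open>t_CS < q\<close>. If \<open>q \<le> t_CS\<close>, this happens iff every score lies in
  \<open>{s < q} \<union> {s > t_CS}\<close> but not every score lies in \<open>{s > t_CS}\<close>; this event has probability
  \<open>(P(s < q) + 1 - F t_CS)\<^sup>m - (1 - F t_CS)\<^sup>m\<close>, and \<open>P(s < q) = F(q-) \<le> 1 - \<alpha>\<close>.\<close>

lemma order_stat_1_le_iff:
  assumes "m \<ge> 1"
  shows "order_stat T m 1 \<le> t \<longleftrightarrow> (\<exists>i<m. T i \<le> t)"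
proof -
  let ?xs = "sort (map T [0..<m])"
  have first_le: "?xs ! 0 \<le> y" if "y \<in> set ?xs" for y
    using that sorted_nth_mono[of ?xs 0] by (metis in_set_conv_nth le0 sorted_sort)
  have "?xs ! 0 \<in> set ?xs"
    using assms by (intro nth_mem) auto
  then show ?thesis
    using first_le unfolding order_stat_def by fastforce
qed

lemma order_stat_kstar_eq_Max:
  assumes "m \<ge> 1" "\<exists>i<m. T i \<le> t"
  shows "order_stat T m (kstar T m t) = Max {T i | i. i < m \<and> T i \<le> t}"
proof -
  let ?xs = "sort (map T [0..<m])"
  define K where "K = {k \<in> {1..m}. order_stat T m k \<le> t}"
  let ?k = "kstar T m t"
  have "1 \<in> K" using assms order_stat_1_le_iff unfolding K_def by auto
  then have "?k \<in> K" unfolding kstar_def K_def[symmetric] by (intro Max_in) (auto simp: K_def)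
  then have k: "1 \<le> ?k" "?k \<le> m" "order_stat T m ?k \<le> t"
    unfolding K_def by auto
  have "?xs ! (?k - 1) \<in> set ?xs" using k by (intro nth_mem) auto
  then have attained: "order_stat T m ?k \<in> {T i | i. i < m \<and> T i \<le> t}"
    using k(3) unfolding order_stat_def by auto
  have dominates: "T i \<le> order_stat T m ?k" if "i < m" "T i \<le> t" for i
  proof -
    have "T i \<in> set ?xs" using \<open>i < m\<close> by simp
    then obtain j where "j < length ?xs" "?xs ! j = T i" by (meson in_set_conv_nth)
    then have j: "j < m" "?xs ! j = T i" by simp_all
    have "Suc j \<in> K" unfolding K_def order_stat_def using j \<open>T i \<le> t\<close> by auto
    then have "Suc j \<le> ?k" unfolding kstar_def K_def[symmetric] by (intro Max_ge) (auto simp: K_def)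
    then have "?xs ! j \<le> ?xs ! (?k - 1)" using k by (intro sorted_nth_mono) auto
    then show ?thesis using j unfolding order_stat_def by simp
  qed
  show ?thesis
    using attained dominates by (intro Max_eqI[symmetric]) auto
qed

lemma order_stat_kstar_le:
  assumes "m \<ge> 1" "order_stat T m 1 \<le> t"
  shows "order_stat T m (kstar T m t) \<le> t"
proof -
  have ne: "\<exists>i<m. T i \<le> t" using assms order_stat_1_le_iff by blast
  then have "Max {T i | i. i < m \<and> T i \<le> t} \<in> {T i | i. i < m \<and> T i \<le> t}"
    by (intro Max_in) auto
  then show ?thesis using order_stat_kstar_eq_Max[OF assms(1) ne] by auto
qed

lemma order_stat_kstar_less_iff:
  assumes "m \<ge> 1" "q \<le> t"
  shows "order_stat T m 1 \<le> t \<and> order_stat T m (kstar T m t) < q \<longleftrightarrow>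
    (\<forall>i<m. T i < q \<or> t < T i) \<and> \<not> (\<forall>i<m. t < T i)"
proof (cases "\<exists>i<m. T i \<le> t")
  case True
  have "finite {T i | i. i < m \<and> T i \<le> t}" "{T i | i. i < m \<and> T i \<le> t} \<noteq> {}"
    using True by auto
  then have "order_stat T m (kstar T m t) < q \<longleftrightarrow> (\<forall>i<m. T i \<le> t \<longrightarrow> T i < q)"
    using order_stat_kstar_eq_Max[OF assms(1) True] by (auto simp: Max_less_iff)
  then show ?thesis
    using True assms order_stat_1_le_iff by (auto simp: not_le)
next
  case False
  then show ?thesis using assms order_stat_1_le_iff by (auto simp: not_le)
qed

lemma cdf_distr:
  assumes "s \<in> borel_measurable P"
  shows "cdf (distr P borel s) x = measure P {z \<in> space P. s z \<le> x}"
  using assms unfolding cdf_def by (simp add: measure_distr vimage_def Int_def conj_commute)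

lemma (in prob_space) prob_greater_cdf_distr:
  assumes "s \<in> borel_measurable M"
  shows "prob {z \<in> space M. c < s z} = 1 - cdf (distr M borel s) c"
proof -
  have "{z \<in> space M. s z \<le> c} \<in> events" using assms by measurable
  from prob_neg[OF this] show ?thesis by (simp add: cdf_distr[OF assms] not_le)
qed

lemma R0_thresh_classifier:
  "R0 P (thresh_classifier s c) = measure P {z \<in> space P. c < s z}"
  unfolding R0_def thresh_classifier_def by (rule arg_cong[where f = "measure P"]) auto

context real_distribution
begin

lemma cdf_less_iff_less_gen_inv:
  assumes "0 < u" "u < 1"
  shows "cdf M x < u \<longleftrightarrow> x < gen_inv (cdf M) u"
proof -
  let ?Q = "{x. u \<le> cdf M x}"
  let ?q = "gen_inv (cdf M) u"
  obtain b where b: "cdf M b < u"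
    using order_tendstoD(2)[OF cdf_lim_at_bot assms(1)] by (auto simp: eventually_at_bot_linorder)
  obtain c where c: "u < cdf M c"
    using order_tendstoD(1)[OF cdf_lim_at_top_prob assms(2)] by (auto simp: eventually_at_top_linorder)
  have bdd: "bdd_below ?Q"
  proof (rule bdd_belowI)
    fix x assume "x \<in> ?Q"
    then show "b \<le> x" using b cdf_nondecreasing[of x b] by fastforce
  qed
  have above_q: "u \<le> cdf M y" if y: "?q < y" for y
  proof -
    have "c \<in> ?Q" using c by simp
    then obtain z where "z \<in> ?Q" "z < y"
      using cInf_lessD[of ?Q y] y unfolding gen_inv_def by blast
    then show ?thesis using cdf_nondecreasing[of z y] by auto
  qed
  have "u \<le> cdf M ?q"
    using cdf_is_right_cont[of ?q] above_q
    by (intro tendsto_lowerbound[of "cdf M" _ "at_right ?q"])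
       (auto simp: continuous_within intro: eventually_mono[OF eventually_at_right_less])
  then have "u \<le> cdf M x" if "?q \<le> x" for x
    using that cdf_nondecreasing order_trans by blast
  moreover have "cdf M x < u" if "x < ?q" for x
  proof (rule ccontr)
    assume "\<not> cdf M x < u"
    then have "?q \<le> x" using bdd cInf_lower[of x ?Q] unfolding gen_inv_def by simp
    then show False using \<open>x < ?q\<close> by simp
  qed
  ultimately show ?thesis using not_le by blast
qed

lemma measure_lessThan_gen_inv_le:
  assumes "0 < u" "u < 1"
  shows "measure M {..< gen_inv (cdf M) u} \<le> u"
proof (rule tendsto_upperbound[OF cdf_at_left])
  let ?q = "gen_inv (cdf M) u"
  have "\<forall>\<^sub>F x in at_left ?q. x \<in> {?q - 1<..<?q}"
    by (rule eventually_at_left_real) simp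
  then show "\<forall>\<^sub>F x in at_left ?q. cdf M x \<le> u"
    by (rule eventually_mono) (simp add: cdf_less_iff_less_gen_inv[OF assms] less_imp_le)
qed simp

end

lemma (in prob_space) measure_PiE_diff_PiE:
  assumes "finite I" "A \<in> sets M" "B \<in> sets M" "B \<subseteq> A"
  shows "measure (PiM I (\<lambda>_. M)) (PiE I (\<lambda>_. A) - PiE I (\<lambda>_. B))
    = measure M A ^ card I - measure M B ^ card I"
proof -
  interpret finite_product_prob_space "\<lambda>_. M" I
    by unfold_locales fact
  have "PiE I (\<lambda>_. B) \<subseteq> PiE I (\<lambda>_. A)"
    using assms(4) by (rule PiE_mono)
  moreover have "PiE I (\<lambda>_. A) \<in> sets (PiM I (\<lambda>_. M))" "PiE I (\<lambda>_. B) \<in> sets (PiM I (\<lambda>_. M))"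
    using assms by (auto intro: sets_PiM_I_finite)
  ultimately have "measure (PiM I (\<lambda>_. M)) (PiE I (\<lambda>_. A) - PiE I (\<lambda>_. B))
      = measure (PiM I (\<lambda>_. M)) (PiE I (\<lambda>_. A)) - measure (PiM I (\<lambda>_. M)) (PiE I (\<lambda>_. B))"
    by (intro finite_measure_Diff)
  also have "\<dots> = measure M A ^ card I - measure M B ^ card I"
    using assms(2,3) by (simp add: prob_times)
  finally show ?thesis .
qed

lemma prob_order_stat_kstar_less:
  assumes "prob_space P" "s \<in> borel_measurable P" "m \<ge> 1" "q \<le> t"
  defines "E \<equiv> {\<omega> \<in> space (PiM {..<m} (\<lambda>_. P)). order_stat (\<lambda>i. s (\<omega> i)) m 1 \<le> t \<and>
    order_stat (\<lambda>i. s (\<omega> i)) m (kstar (\<lambda>i. s (\<omega> i)) m t) < q}"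
  shows "E \<in> sets (PiM {..<m} (\<lambda>_. P))"
    and "measure (PiM {..<m} (\<lambda>_. P)) E
      = (measure P {z \<in> space P. s z < q} + measure P {z \<in> space P. t < s z}) ^ m
        - measure P {z \<in> space P. t < s z} ^ m"
proof -
  interpret prob_space P by fact
  note [measurable] = assms(2)
  define A where "A = {z \<in> space P. s z < q \<or> t < s z}"
  define B where "B = {z \<in> space P. t < s z}"
  have sets_AB [measurable]: "A \<in> sets P" "B \<in> sets P"
    unfolding A_def B_def by measurable
  have "B \<subseteq> A" unfolding A_def B_def by auto
  have "\<omega> \<in> PiE {..<m} (\<lambda>_. A) \<longleftrightarrow>
      \<omega> \<in> PiE {..<m} (\<lambda>_. space P) \<and> (\<forall>i<m. s (\<omega> i) < q \<or> t < s (\<omega> i))"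
    "\<omega> \<in> PiE {..<m} (\<lambda>_. B) \<longleftrightarrow> \<omega> \<in> PiE {..<m} (\<lambda>_. space P) \<and> (\<forall>i<m. t < s (\<omega> i))"
    for \<omega>
    unfolding A_def B_def PiE_iff by auto
  then have E_eq: "E = PiE {..<m} (\<lambda>_. A) - PiE {..<m} (\<lambda>_. B)"
    unfolding E_def using order_stat_kstar_less_iff[OF assms(3,4)]
    by (intro set_eqI) (simp add: space_PiM, blast)
  show "E \<in> sets (PiM {..<m} (\<lambda>_. P))"
    unfolding E_eq by (intro sets.Diff sets_PiM_I_finite) simp_all
  have "A = {z \<in> space P. s z < q} \<union> B" "{z \<in> space P. s z < q} \<inter> B = {}"
    unfolding A_def B_def using assms(4) by auto
  then have "measure P A = measure P {z \<in> space P. s z < q} + measure P B"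
    by (simp add: finite_measure_Union)
  moreover have "measure (PiM {..<m} (\<lambda>_. P)) E = measure P A ^ m - measure P B ^ m"
    unfolding E_eq using measure_PiE_diff_PiE[OF finite_lessThan sets_AB \<open>B \<subseteq> A\<close>] by simp
  ultimately show "measure (PiM {..<m} (\<lambda>_. P)) E
      = (measure P {z \<in> space P. s z < q} + measure P {z \<in> space P. t < s z}) ^ m
        - measure P {z \<in> space P. t < s z} ^ m"
    by (simp add: B_def)
qed

theorem proposition4:
  fixes P0 :: "'a::euclidean_space measure" and s :: "'a \<Rightarrow> real"
    and t_CS \<alpha> :: real and m :: nat
  assumes "prob_space P0" and "sets P0 = sets borel"
    and "s \<in> borel_measurable P0"
    and "m \<ge> 1" and "0 < \<alpha>" and "\<alpha> < 1"
  defines "F \<equiv> (\<lambda>x. measure P0 {z \<in> space P0. s z \<le> x})"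
    and "Pm \<equiv> PiM {..<m} (\<lambda>_. P0)"
    and "T \<equiv> (\<lambda>\<omega> i. s (\<omega> i))"
    and "phi_ks \<equiv> (\<lambda>\<omega>. thresh_classifier s (order_stat (\<lambda>i. s (\<omega> i)) m (kstar (\<lambda>i. s (\<omega> i)) m t_CS)))"
  shows "(\<forall>\<omega>\<in>space Pm. order_stat (T \<omega>) m 1 \<le> t_CS \<longrightarrow>
            R0 P0 (phi_ks \<omega>) \<ge> R0 P0 (thresh_classifier s t_CS))
       \<and> (t_CS < gen_inv F (1 - \<alpha>) \<longrightarrow>
            (\<forall>\<omega>\<in>space Pm. order_stat (T \<omega>) m 1 \<le> t_CS \<longrightarrow> R0 P0 (phi_ks \<omega>) > \<alpha>))
       \<and> (t_CS \<ge> gen_inv F (1 - \<alpha>) \<longrightarrow>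
            {\<omega> \<in> space Pm. order_stat (T \<omega>) m 1 \<le> t_CS \<and> R0 P0 (phi_ks \<omega>) > \<alpha>} \<in> sets Pm
          \<and> measure Pm {\<omega> \<in> space Pm. order_stat (T \<omega>) m 1 \<le> t_CS \<and> R0 P0 (phi_ks \<omega>) > \<alpha>}
              \<le> (2 - \<alpha> - F t_CS) ^ m - (1 - F t_CS) ^ m)"
proof -
  interpret P0: prob_space P0 by fact
  define M where "M = distr P0 borel s"
  interpret M: real_distribution M
    using assms(3) unfolding M_def by (intro P0.real_distribution_distr) simp
  have F_cdf: "F = cdf M"
    unfolding F_def M_def by (simp add: fun_eq_iff cdf_distr[OF assms(3)])
  have tail: "measure P0 {z \<in> space P0. c < s z} = 1 - cdf M c" for c
    unfolding M_def using assms(3) by (rule P0.prob_greater_cdf_distr)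
  define q where "q = gen_inv (cdf M) (1 - \<alpha>)"
  define L where "L \<omega> = order_stat (T \<omega>) m (kstar (T \<omega>) m t_CS)" for \<omega>
  have R0_phi: "R0 P0 (phi_ks \<omega>) = 1 - cdf M (L \<omega>)" for \<omega>
    unfolding phi_ks_def L_def T_def by (simp add: R0_thresh_classifier tail)
  have "0 < 1 - \<alpha>" "1 - \<alpha> < 1" using assms(5,6) by simp_all
  note quantile = M.cdf_less_iff_less_gen_inv[OF this] M.measure_lessThan_gen_inv_le[OF this]
  have exceeds_iff: "\<alpha> < R0 P0 (phi_ks \<omega>) \<longleftrightarrow> L \<omega> < q" for \<omega>
    using quantile(1)[of "L \<omega>"] unfolding R0_phi q_def by linarith
  have L_le: "L \<omega> \<le> t_CS" if "order_stat (T \<omega>) m 1 \<le> t_CS" for \<omega>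
    using order_stat_kstar_le[OF assms(4) that] unfolding L_def .
  let ?E = "{\<omega> \<in> space Pm. order_stat (T \<omega>) m 1 \<le> t_CS \<and> \<alpha> < R0 P0 (phi_ks \<omega>)}"
  have "?E \<in> sets Pm \<and> measure Pm ?E \<le> (2 - \<alpha> - cdf M t_CS) ^ m - (1 - cdf M t_CS) ^ m"
    if "q \<le> t_CS"
  proof -
    have "measure P0 {z \<in> space P0. s z < q} \<le> 1 - \<alpha>"
      using quantile(2) assms(3) unfolding M_def q_def
      by (simp add: measure_distr vimage_def Int_def conj_commute)
    then have "(measure P0 {z \<in> space P0. s z < q} + (1 - cdf M t_CS)) ^ m
        \<le> (2 - \<alpha> - cdf M t_CS) ^ m"
      using M.cdf_bounded_prob by (intro power_mono) auto
    moreover have "?E = {\<omega> \<in> space Pm. order_stat (T \<omega>) m 1 \<le> t_CS \<and> L \<omega> < q}"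
      using exceeds_iff by simp
    ultimately show ?thesis
      unfolding L_def T_def Pm_def
      using prob_order_stat_kstar_less[OF assms(1,3,4) that] by (simp add: tail)
  qed
  moreover have "R0 P0 (thresh_classifier s t_CS) \<le> R0 P0 (phi_ks \<omega>)"
    if "order_stat (T \<omega>) m 1 \<le> t_CS" for \<omega>
    using L_le[OF that] M.cdf_nondecreasing unfolding R0_phi R0_thresh_classifier tail by simp
  moreover have "\<alpha> < R0 P0 (phi_ks \<omega>)" if "t_CS < q" "order_stat (T \<omega>) m 1 \<le> t_CS" for \<omega>
    using L_le[OF that(2)] that(1) exceeds_iff by simp
  ultimately show ?thesis
    unfolding F_cdf q_def[symmetric] by blast
qed

end
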